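(* Let $X$ be a well-filtered coherent space. If $X$ is first-countable, then $X$ is sober.
   Context: Spaces are $T_0$; the specialization order is $x\le y$ iff $x\in\overline{\{y\}}$, and a subset is saturated if it is an upper set in this order. $X$ is well-filtered if for every filtered family $\mathcal F$ of compact saturated subsets and every open $U$, $\bigcap\mathcal F\subseteq U$ implies $F\subseteq U$ for some $F\in\mathcal F$. $X$ is coherent if the intersection of any two compact saturated subsets is compact. A $T_0$ space is sober if every irreducible closed set equals $\overline{\{x\}}$ for some point $x$. *)

theory Defs
  imports "HOL-Analysis.Analysis"
begin

definition spec_le :: "'a topology \<Rightarrow> 'a \<Rightarrow> 'a \<Rightarrow> bool" where
  "spec_le X x y \<longleftrightarrow> x \<in> topspace X \<and> y \<in> topspace X \<and> x \<in> X closure_of {y}"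

definition saturated_in :: "'a topology \<Rightarrow> 'a set \<Rightarrow> bool" where
  "saturated_in X K \<longleftrightarrow> K \<subseteq> topspace X \<and>
     (\<forall>x y. x \<in> K \<and> spec_le X x y \<longrightarrow> y \<in> K)"

definition compact_saturated_in :: "'a topology \<Rightarrow> 'a set \<Rightarrow> bool" where
  "compact_saturated_in X K \<longleftrightarrow> compactin X K \<and> saturated_in X K"

definition filtered_family :: "'a set set \<Rightarrow> bool" where
  "filtered_family \<F> \<longleftrightarrow> \<F> \<noteq> {} \<and>
     (\<forall>F1 \<in> \<F>. \<forall>F2 \<in> \<F>. \<exists>F3 \<in> \<F>. F3 \<subseteq> F1 \<inter> F2)"

definition well_filtered :: "'a topology \<Rightarrow> bool" where
  "well_filtered X \<longleftrightarrow>
     (\<forall>\<F> U. filtered_family \<F> \<and> (\<forall>K \<in> \<F>. compact_saturated_in X K) \<and> openin X U \<and>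
        \<Inter>\<F> \<subseteq> U \<longrightarrow> (\<exists>F \<in> \<F>. F \<subseteq> U))"

definition coherent_space :: "'a topology \<Rightarrow> bool" where
  "coherent_space X \<longleftrightarrow>
     (\<forall>K1 K2. compact_saturated_in X K1 \<and> compact_saturated_in X K2 \<longrightarrow> compactin X (K1 \<inter> K2))"

definition irreducible_closed :: "'a topology \<Rightarrow> 'a set \<Rightarrow> bool" where
  "irreducible_closed X A \<longleftrightarrow> closedin X A \<and> A \<noteq> {} \<and>
     (\<forall>B C. closedin X B \<and> closedin X C \<and> A \<subseteq> B \<union> C \<longrightarrow> A \<subseteq> B \<or> A \<subseteq> C)"

definition sober_space :: "'a topology \<Rightarrow> bool" where
  "sober_space X \<longleftrightarrow> t0_space X \<and>
     (\<forall>A. irreducible_closed X A \<longrightarrow> (\<exists>x \<in> topspace X. A = X closure_of {x}))"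

end

theory Submission
  imports Defs
begin

text \<open>
  An irreducible closed set \<open>A\<close> is the closure of a point as soon as it is directed in the
  specialization order: then the principal upper sets \<open>\<up>a\<close>, \<open>a \<in> A\<close>, form a filtered family of
  compact saturated sets all meeting \<open>A\<close>, and well-filteredness yields a point of \<open>A\<close> above
  all of \<open>A\<close>. For directedness, given \<open>a, b \<in> A\<close>, first countability and irreducibility give a
  sequence \<open>s\<close> in \<open>A\<close> converging to both \<open>a\<close> and \<open>b\<close>. The sets
  \<open>\<up>({a} \<union> {s k | k \<ge> n}) \<inter> \<up>({b} \<union> {s k | k \<ge> n})\<close> are compact saturated by coherence,
  decrease in \<open>n\<close> and meet \<open>A\<close>, so well-filteredness gives \<open>z \<in> A\<close> in all of them; such a \<open>z\<close>
  lies above \<open>a\<close> and \<open>b\<close>, since lying above infinitely many \<open>s k\<close> forces it above every limit.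
\<close>

definition upclosure :: "'a topology \<Rightarrow> 'a set \<Rightarrow> 'a set" where
  "upclosure X S = {y. \<exists>x\<in>S. spec_le X x y}"

lemma spec_le_iff_openin:
  "spec_le X x y \<longleftrightarrow>
     x \<in> topspace X \<and> y \<in> topspace X \<and> (\<forall>U. openin X U \<and> x \<in> U \<longrightarrow> y \<in> U)"
  by (auto simp: spec_le_def in_closure_of)

lemma spec_le_refl: "x \<in> topspace X \<Longrightarrow> spec_le X x x"
  by (simp add: spec_le_iff_openin)

lemma spec_le_trans: "spec_le X x y \<Longrightarrow> spec_le X y z \<Longrightarrow> spec_le X x z"
  unfolding spec_le_iff_openin by blast

lemma subset_upclosure: "S \<subseteq> topspace X \<Longrightarrow> S \<subseteq> upclosure X S"
  by (auto simp: upclosure_def intro: spec_le_refl)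

lemma upclosure_mono: "S \<subseteq> T \<Longrightarrow> upclosure X S \<subseteq> upclosure X T"
  unfolding upclosure_def by blast

lemma upclosure_singleton_antimono:
  assumes "spec_le X a z"
  shows "upclosure X {z} \<subseteq> upclosure X {a}"
proof
  fix y assume "y \<in> upclosure X {z}"
  then have "spec_le X z y"
    by (simp add: upclosure_def)
  with assms have "spec_le X a y"
    by (rule spec_le_trans)
  then show "y \<in> upclosure X {a}"
    by (simp add: upclosure_def)
qed

lemma upclosure_subset_topspace: "upclosure X S \<subseteq> topspace X"
  by (auto simp: upclosure_def spec_le_def)

lemma saturated_upclosure: "saturated_in X (upclosure X S)"
  unfolding saturated_in_def
proof (intro conjI strip)
  show "upclosure X S \<subseteq> topspace X"
    by (rule upclosure_subset_topspace)
  fix x y assume "x \<in> upclosure X S \<and> spec_le X x y"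
  then show "y \<in> upclosure X S"
    unfolding upclosure_def by (blast intro: spec_le_trans)
qed

lemma compactin_upclosure:
  assumes "compactin X S"
  shows "compactin X (upclosure X S)"
  unfolding compactin_def
proof (intro conjI strip)
  show "upclosure X S \<subseteq> topspace X"
    by (rule upclosure_subset_topspace)
  fix \<U> assume \<U>: "(\<forall>U\<in>\<U>. openin X U) \<and> upclosure X S \<subseteq> \<Union>\<U>"
  have "S \<subseteq> upclosure X S"
    by (rule subset_upclosure[OF compactin_subset_topspace[OF assms]])
  then have "\<exists>\<F>. finite \<F> \<and> \<F> \<subseteq> \<U> \<and> S \<subseteq> \<Union>\<F>"
    using \<U> by (intro compactinD[OF assms]) auto
  then obtain \<F> where \<F>: "finite \<F>" "\<F> \<subseteq> \<U>" "S \<subseteq> \<Union>\<F>"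
    by blast
  have "upclosure X S \<subseteq> \<Union>\<F>"
  proof
    fix y assume "y \<in> upclosure X S"
    then obtain x where "x \<in> S" "spec_le X x y"
      by (auto simp: upclosure_def)
    moreover obtain U where "U \<in> \<F>" "x \<in> U"
      using \<F>(3) \<open>x \<in> S\<close> by blast
    moreover have "openin X U"
      using \<open>U \<in> \<F>\<close> \<F>(2) \<U> by blast
    ultimately show "y \<in> \<Union>\<F>"
      unfolding spec_le_iff_openin by blast
  qed
  with \<F> show "\<exists>\<F>. finite \<F> \<and> \<F> \<subseteq> \<U> \<and> upclosure X S \<subseteq> \<Union>\<F>"
    by blast
qed

lemma compact_saturated_upclosure:
  "compactin X S \<Longrightarrow> compact_saturated_in X (upclosure X S)"
  by (simp add: compact_saturated_in_def compactin_upclosure saturated_upclosure)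

lemma coherent_space_compact_saturated_Int:
  assumes "coherent_space X" "compact_saturated_in X K" "compact_saturated_in X L"
  shows "compact_saturated_in X (K \<inter> L)"
  using assms unfolding coherent_space_def compact_saturated_in_def saturated_in_def by blast

lemma filtered_family_range_decseq:
  assumes "decseq L"
  shows "filtered_family (range L)"
  unfolding filtered_family_def
proof (intro conjI ballI)
  fix K1 K2 assume "K1 \<in> range L" "K2 \<in> range L"
  then obtain i j where "K1 = L i" "K2 = L j"
    by blast
  then have "L (max i j) \<subseteq> K1 \<inter> K2"
    using decseqD[OF assms, of i "max i j"] decseqD[OF assms, of j "max i j"] by simp
  then show "\<exists>K\<in>range L. K \<subseteq> K1 \<inter> K2"
    by blast
qed simp

lemma well_filtered_Inter_meets_closed:
  assumes "well_filtered X" "filtered_family \<F>" "\<And>K. K \<in> \<F> \<Longrightarrow> compact_saturated_in X K"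
    and "closedin X A" "\<And>K. K \<in> \<F> \<Longrightarrow> K \<inter> A \<noteq> {}"
  shows "\<Inter>\<F> \<inter> A \<noteq> {}"
proof
  assume "\<Inter>\<F> \<inter> A = {}"
  moreover obtain K where "K \<in> \<F>"
    using assms(2) by (auto simp: filtered_family_def)
  moreover have "K \<subseteq> topspace X"
    using assms(3)[OF \<open>K \<in> \<F>\<close>] by (simp add: compact_saturated_in_def saturated_in_def)
  ultimately have "\<Inter>\<F> \<subseteq> topspace X - A"
    by blast
  then obtain K' where "K' \<in> \<F>" "K' \<subseteq> topspace X - A"
    using assms(1)[unfolded well_filtered_def, rule_format, of \<F> "topspace X - A"] assms(2-4)
    by blast
  then show False
    using assms(5) by blast
qed

lemma irreducible_closed_meets_open_Int:
  assumes "irreducible_closed X A" "openin X U" "openin X V" "A \<inter> U \<noteq> {}" "A \<inter> V \<noteq> {}"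
  shows "A \<inter> U \<inter> V \<noteq> {}"
proof
  assume "A \<inter> U \<inter> V = {}"
  then have "A \<subseteq> (topspace X - U) \<union> (topspace X - V)"
    using assms(1) closedin_subset by (auto simp: irreducible_closed_def)
  moreover have "closedin X (topspace X - U)" "closedin X (topspace X - V)"
    using assms(2,3) by auto
  ultimately have "A \<subseteq> topspace X - U \<or> A \<subseteq> topspace X - V"
    using assms(1) unfolding irreducible_closed_def by blast
  then show False
    using assms(4,5) by blast
qed

lemma first_countable_neighbourhood_sequence:
  assumes "first_countable X" "a \<in> topspace X"
  obtains U :: "nat \<Rightarrow> 'a set" where "\<And>n. openin X (U n)" "\<And>n. a \<in> U n"
    "\<And>s. (\<And>n. s n \<in> U n) \<Longrightarrow> limitin X s a sequentially"
proof -
  obtain \<B> where "countable \<B>" and \<B>: "\<forall>V\<in>\<B>. openin X V"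
    "\<forall>W. openin X W \<and> a \<in> W \<longrightarrow> (\<exists>V\<in>\<B>. a \<in> V \<and> V \<subseteq> W)"
    using bspec[OF assms(1)[unfolded first_countable_def] assms(2)] by (elim exE conjE) blast
  define \<B>' where "\<B>' = {V \<in> \<B>. a \<in> V}"
  have "\<B>' \<noteq> {}"
    using \<B>(2) assms(2) unfolding \<B>'_def by blast
  moreover have "countable \<B>'"
    using \<open>countable \<B>\<close> by (simp add: \<B>'_def)
  ultimately have range_c: "range (from_nat_into \<B>') = \<B>'"
    by (rule range_from_nat_into)
  define U where "U n = \<Inter>(from_nat_into \<B>' ` {..n})" for n
  have basic: "openin X (from_nat_into \<B>' i) \<and> a \<in> from_nat_into \<B>' i" for i
    using range_c \<B>(1) unfolding \<B>'_def by blast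
  show thesis
  proof
    show "openin X (U n)" and "a \<in> U n" for n
      unfolding U_def using basic by (auto intro: openin_Inter)
  next
    fix s assume s: "\<And>n. s n \<in> U n"
    show "limitin X s a sequentially"
      unfolding limitin_def
    proof (intro conjI strip)
      show "a \<in> topspace X"
        by (rule assms(2))
      fix W assume "openin X W \<and> a \<in> W"
      then obtain V where "V \<in> \<B>'" "V \<subseteq> W"
        using \<B>(2) unfolding \<B>'_def by blast
      then obtain j where "from_nat_into \<B>' j \<subseteq> W"
        using range_c by (metis rangeE)
      then have "s n \<in> W" if "j \<le> n" for n
        using s[of n] that by (auto simp: U_def)
      then show "eventually (\<lambda>n. s n \<in> W) sequentially"
        by (auto simp: eventually_sequentially)
    qed
  qed
qed

lemma irreducible_closed_common_limit:
  assumes "first_countable X" "irreducible_closed X A" "a \<in> A" "b \<in> A"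
  obtains s where "range s \<subseteq> A" "limitin X s a sequentially" "limitin X s b sequentially"
proof -
  have "A \<subseteq> topspace X"
    using assms(2) by (simp add: irreducible_closed_def closedin_subset)
  then have "a \<in> topspace X" "b \<in> topspace X"
    using assms(3,4) by auto
  obtain Ua where Ua: "\<And>n. openin X (Ua n)" "\<And>n. a \<in> Ua n"
    "\<And>s. (\<And>n. s n \<in> Ua n) \<Longrightarrow> limitin X s a sequentially"
    by (rule first_countable_neighbourhood_sequence[OF assms(1) \<open>a \<in> topspace X\<close>]) blast
  obtain Ub where Ub: "\<And>n. openin X (Ub n)" "\<And>n. b \<in> Ub n"
    "\<And>s. (\<And>n. s n \<in> Ub n) \<Longrightarrow> limitin X s b sequentially"
    by (rule first_countable_neighbourhood_sequence[OF assms(1) \<open>b \<in> topspace X\<close>]) blast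
  have "\<exists>x. x \<in> A \<inter> Ua n \<inter> Ub n" for n
    using irreducible_closed_meets_open_Int[OF assms(2) Ua(1) Ub(1)] Ua(2) Ub(2) assms(3,4) by blast
  then obtain s where s: "\<And>n. s n \<in> A \<inter> Ua n \<inter> Ub n"
    by metis
  show thesis
  proof
    show "range s \<subseteq> A"
      using s by blast
    show "limitin X s a sequentially"
      using s by (intro Ua(3)) blast
    show "limitin X s b sequentially"
      using s by (intro Ub(3)) blast
  qed
qed

lemma spec_le_if_in_upclosure_tails:
  assumes "limitin X s a sequentially" "\<And>n. z \<in> upclosure X (insert a (s ` {n..}))"
  shows "spec_le X a z"
proof (rule ccontr)
  assume "\<not> spec_le X a z"
  have below_tail: "\<exists>k\<ge>n. spec_le X (s k) z" for n
  proof -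
    obtain x where "x \<in> insert a (s ` {n..})" "spec_le X x z"
      using assms(2)[of n] by (auto simp: upclosure_def)
    with \<open>\<not> spec_le X a z\<close> show ?thesis
      by auto
  qed
  have "spec_le X a z"
    unfolding spec_le_iff_openin
  proof (intro conjI strip)
    show "a \<in> topspace X"
      using assms(1) limitin_topspace by metis
    show "z \<in> topspace X"
      using below_tail[of 0] by (auto simp: spec_le_def)
    fix W assume W: "openin X W \<and> a \<in> W"
    then obtain N where "\<forall>k\<ge>N. s k \<in> W"
      using assms(1) by (auto simp: limitin_def eventually_sequentially)
    moreover obtain k where "k \<ge> N" "spec_le X (s k) z"
      using below_tail by blast
    ultimately show "z \<in> W"
      using W by (auto simp: spec_le_iff_openin)
  qed
  with \<open>\<not> spec_le X a z\<close> show False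
    by blast
qed

lemma irreducible_closed_directed:
  assumes "well_filtered X" "coherent_space X" "first_countable X"
    and "irreducible_closed X A" "a \<in> A" "b \<in> A"
  shows "\<exists>z\<in>A. spec_le X a z \<and> spec_le X b z"
proof -
  have "closedin X A"
    using assms(4) by (simp add: irreducible_closed_def)
  then have "A \<subseteq> topspace X"
    by (rule closedin_subset)
  obtain s where s: "range s \<subseteq> A" "limitin X s a sequentially" "limitin X s b sequentially"
    by (rule irreducible_closed_common_limit[OF assms(3-6)]) blast
  define T where "T c n = upclosure X (insert c (s ` {n..}))" for c n
  define L where "L n = T a n \<inter> T b n" for n
  have T: "compact_saturated_in X (T c n)" if "limitin X s c sequentially" for c n
    unfolding T_def using that s(1) \<open>A \<subseteq> topspace X\<close>
    by (intro compact_saturated_upclosure compactin_sequence_with_limit) auto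
  have "compact_saturated_in X (L n)" for n
    unfolding L_def by (intro coherent_space_compact_saturated_Int assms(2) T s(2,3))
  moreover have "decseq L"
    unfolding L_def T_def by (intro decseq_SucI Int_mono upclosure_mono insert_mono image_mono) auto
  moreover have "L n \<inter> A \<noteq> {}" for n
  proof -
    have "s n \<in> upclosure X (insert c (s ` {n..}))" for c
      unfolding upclosure_def using s(1) \<open>A \<subseteq> topspace X\<close>
      by (auto intro!: bexI[of _ "s n"] spec_le_refl)
    then show ?thesis
      using s(1) unfolding L_def T_def by blast
  qed
  ultimately have "\<Inter>(range L) \<inter> A \<noteq> {}"
    using well_filtered_Inter_meets_closed[OF assms(1) filtered_family_range_decseq[OF \<open>decseq L\<close>]
        _ \<open>closedin X A\<close>]
    by blast
  then obtain z where z: "z \<in> A" "\<And>n. z \<in> L n"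
    by blast
  have "spec_le X a z"
    using z(2) by (intro spec_le_if_in_upclosure_tails[OF s(2)]) (auto simp: L_def T_def)
  moreover have "spec_le X b z"
    using z(2) by (intro spec_le_if_in_upclosure_tails[OF s(3)]) (auto simp: L_def T_def)
  ultimately show ?thesis
    using z(1) by blast
qed

lemma well_filtered_directed_closed_eq_closure_of_point:
  assumes "well_filtered X" "closedin X A" "A \<noteq> {}"
    and directed: "\<And>a b. a \<in> A \<Longrightarrow> b \<in> A \<Longrightarrow> \<exists>z\<in>A. spec_le X a z \<and> spec_le X b z"
  obtains z where "z \<in> A" "A = X closure_of {z}"
proof -
  define \<F> where "\<F> = (\<lambda>a. upclosure X {a}) ` A"
  have "A \<subseteq> topspace X"
    using assms(2) by (rule closedin_subset)
  have "filtered_family \<F>"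
    unfolding filtered_family_def
  proof (intro conjI ballI)
    show "\<F> \<noteq> {}"
      using assms(3) by (simp add: \<F>_def)
    fix K1 K2 assume "K1 \<in> \<F>" "K2 \<in> \<F>"
    then obtain a b where "a \<in> A" "b \<in> A" "K1 = upclosure X {a}" "K2 = upclosure X {b}"
      by (auto simp: \<F>_def)
    moreover obtain z where "z \<in> A" "spec_le X a z" "spec_le X b z"
      using directed[OF \<open>a \<in> A\<close> \<open>b \<in> A\<close>] by blast
    ultimately have "upclosure X {z} \<subseteq> K1 \<inter> K2"
      by (simp add: upclosure_singleton_antimono)
    with \<open>z \<in> A\<close> show "\<exists>K\<in>\<F>. K \<subseteq> K1 \<inter> K2"
      unfolding \<F>_def by blast
  qed
  moreover have "compact_saturated_in X K" if "K \<in> \<F>" for K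
    using that \<open>A \<subseteq> topspace X\<close> by (auto simp: \<F>_def intro!: compact_saturated_upclosure)
  moreover have "K \<inter> A \<noteq> {}" if "K \<in> \<F>" for K
  proof -
    obtain a where "a \<in> A" "K = upclosure X {a}"
      using \<open>K \<in> \<F>\<close> by (auto simp: \<F>_def)
    moreover have "a \<in> upclosure X {a}"
      using subset_upclosure[of "{a}" X] \<open>a \<in> A\<close> \<open>A \<subseteq> topspace X\<close> by blast
    ultimately show ?thesis
      by blast
  qed
  ultimately have "\<Inter>\<F> \<inter> A \<noteq> {}"
    by (rule well_filtered_Inter_meets_closed[OF assms(1) _ _ assms(2)])
  then obtain z where "z \<in> A" and z_above: "\<And>a. a \<in> A \<Longrightarrow> z \<in> upclosure X {a}"
    unfolding \<F>_def by blast
  have "A \<subseteq> X closure_of {z}"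
  proof
    fix a assume "a \<in> A"
    then show "a \<in> X closure_of {z}"
      using z_above[OF \<open>a \<in> A\<close>] by (simp add: upclosure_def spec_le_def)
  qed
  moreover have "X closure_of {z} \<subseteq> A"
    using \<open>z \<in> A\<close> assms(2) by (simp add: closure_of_minimal)
  ultimately show thesis
    using that \<open>z \<in> A\<close> by blast
qed

theorem corollary3p13:
  fixes X :: "'a topology"
  assumes "t0_space X"
    and "well_filtered X"
    and "coherent_space X"
    and "first_countable X"
  shows "sober_space X"
  unfolding sober_space_def
proof (intro conjI allI impI)
  show "t0_space X"
    by fact
  fix A assume A: "irreducible_closed X A"
  then have "closedin X A" "A \<noteq> {}"
    by (auto simp: irreducible_closed_def)
  then obtain z where "z \<in> A" "A = X closure_of {z}"
    using well_filtered_directed_closed_eq_closure_of_point[OF assms(2)]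
      irreducible_closed_directed[OF assms(2-4) A] by blast
  moreover have "A \<subseteq> topspace X"
    using \<open>closedin X A\<close> by (rule closedin_subset)
  ultimately show "\<exists>x\<in>topspace X. A = X closure_of {x}"
    by blast
qed

end
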